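(* Let $S$ be a HeyVL program and let $S'$ be a subprogram obtained from $S$ by only removing (replacing by $\mathtt{skip}$) occurrences of statements that are extensive. Then $S'$ is a verification-witnessing slice of $S$ with respect to $(X,Y)$ for all expectations $X,Y$. Moreover, $\mathrm{vp}[S](Z)\succeq\mathrm{vp}[S'](Z)$ for every expectation $Z$.
   Context: Expectations are functions $X:\mathsf{States}\to[0,\infty]$ on program states, ordered pointwise ($\preceq$, with converse $\succeq$). HeyVL statements and their verification pre-expectation transformer $\mathrm{vp}[S]$ are: assignment $x :\approx p_1\cdot t_1+\dots+p_n\cdot t_n$ with $\mathrm{vp}(X)=\sum_i p_i X[x/t_i]$ (deterministic $x:=a$ gives $X[x/a]$); $\mathtt{reward}\ a$: $X+a$; $S_1;S_2$: $\mathrm{vp}[S_1](\mathrm{vp}[S_2](X))$; $\mathtt{if}(\sqcap)\{S_1\}\mathtt{else}\{S_2\}$ / $\mathtt{if}(\sqcup)\{S_1\}\mathtt{else}\{S_2\}$: pointwise min / max of $\mathrm{vp}[S_1](X),\mathrm{vp}[S_2](X)$; $\mathtt{assert}\ Y$: $\min(Y,X)$; $\mathtt{coassert}\ Y$: $\max(Y,X)$; $\mathtt{assume}\ Y$: $\infty$ where $Y\le X$, $X$ elsewhere; $\mathtt{coassume}\ Y$: $0$ where $Y\ge X$, $X$ elsewhere; $\mathtt{havoc}\ x$/$\mathtt{cohavoc}\ x$: pointwise inf/sup of $X$ over values of $x$; $\mathtt{validate}$: $\infty$ where $X=\infty$, else $0$; $\mathtt{covalidate}$: $0$ where $X=0$,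 else $\infty$. $\mathrm{vp}[\mathtt{skip}](X)=X$. A statement $S$ is extensive if $\mathrm{vp}[S](X)\succeq X$ for all $X$. Write $\models\{X\}S\{Y\}$ iff $X\preceq\mathrm{vp}[S](Y)$. A subprogram $P$ of $S$ is a verification-witnessing slice of $S$ w.r.t. $(X,Y)$ if $\models\{X\}P\{Y\}$ implies $\models\{X\}S\{Y\}$. *)

theory Defs
  imports "HOL-Library.Extended_Nonnegative_Real"
begin

type_synonym ('v,'d) state = "'v \<Rightarrow> 'd"
type_synonym ('v,'d) expectation = "('v,'d) state \<Rightarrow> ennreal"

(* HeyVL statements.  Assign x [(p1,t1),...,(pn,tn)] is  x :\<approx> p1\<cdot>t1 + ... + pn\<cdot>tn
   (a deterministic assignment x := a is Assign x [(\<lambda>_. 1, a)]). *)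
datatype ('v,'d) stmt =
    Assign 'v "((('v,'d) state \<Rightarrow> ennreal) \<times> (('v,'d) state \<Rightarrow> 'd)) list"
  | Reward "('v,'d) expectation"
  | Seq "('v,'d) stmt" "('v,'d) stmt"
  | IfDemonic "('v,'d) stmt" "('v,'d) stmt"
  | IfAngelic "('v,'d) stmt" "('v,'d) stmt"
  | Assert "('v,'d) expectation"
  | Coassert "('v,'d) expectation"
  | Assume "('v,'d) expectation"
  | Coassume "('v,'d) expectation"
  | Havoc 'v
  | Cohavoc 'v
  | Validate
  | Covalidate
  | Skip

primrec vp :: "('v,'d) stmt \<Rightarrow> ('v,'d) expectation \<Rightarrow> ('v,'d) expectation" where
  "vp (Assign x ps) X = (\<lambda>\<sigma>. sum_list (map (\<lambda>(p,t). p \<sigma> * X (\<sigma>(x := t \<sigma>))) ps))"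
| "vp (Reward a) X = (\<lambda>\<sigma>. X \<sigma> + a \<sigma>)"
| "vp (Seq S1 S2) X = vp S1 (vp S2 X)"
| "vp (IfDemonic S1 S2) X = (\<lambda>\<sigma>. min (vp S1 X \<sigma>) (vp S2 X \<sigma>))"
| "vp (IfAngelic S1 S2) X = (\<lambda>\<sigma>. max (vp S1 X \<sigma>) (vp S2 X \<sigma>))"
| "vp (Assert Y) X = (\<lambda>\<sigma>. min (Y \<sigma>) (X \<sigma>))"
| "vp (Coassert Y) X = (\<lambda>\<sigma>. max (Y \<sigma>) (X \<sigma>))"
| "vp (Assume Y) X = (\<lambda>\<sigma>. if Y \<sigma> \<le> X \<sigma> then \<infinity> else X \<sigma>)"
| "vp (Coassume Y) X = (\<lambda>\<sigma>. if Y \<sigma> \<ge> X \<sigma> then 0 else X \<sigma>)"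
| "vp (Havoc x) X = (\<lambda>\<sigma>. INF v. X (\<sigma>(x := v)))"
| "vp (Cohavoc x) X = (\<lambda>\<sigma>. SUP v. X (\<sigma>(x := v)))"
| "vp Validate X = (\<lambda>\<sigma>. if X \<sigma> = \<infinity> then \<infinity> else 0)"
| "vp Covalidate X = (\<lambda>\<sigma>. if X \<sigma> = 0 then 0 else \<infinity>)"
| "vp Skip X = X"

definition extensive :: "('v,'d) stmt \<Rightarrow> bool" where
  "extensive S \<longleftrightarrow> (\<forall>X. X \<le> vp S X)"

definition valid_triple :: "('v,'d) expectation \<Rightarrow> ('v,'d) stmt \<Rightarrow> ('v,'d) expectation \<Rightarrow> bool" where
  "valid_triple X S Y \<longleftrightarrow> X \<le> vp S Y"

definition vw_slice :: "('v,'d) stmt \<Rightarrow> ('v,'d) stmt \<Rightarrow> ('v,'d) expectation \<Rightarrow> ('v,'d) expectation \<Rightarrow> bool" where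
  "vw_slice P S X Y \<longleftrightarrow> (valid_triple X P Y \<longrightarrow> valid_triple X S Y)"

inductive remove_ext :: "('v,'d) stmt \<Rightarrow> ('v,'d) stmt \<Rightarrow> bool" where
  keep: "remove_ext S S"
| drop: "extensive S \<Longrightarrow> remove_ext S Skip"
| seq: "remove_ext S1 S1' \<Longrightarrow> remove_ext S2 S2' \<Longrightarrow> remove_ext (Seq S1 S2) (Seq S1' S2')"
| ifd: "remove_ext S1 S1' \<Longrightarrow> remove_ext S2 S2' \<Longrightarrow> remove_ext (IfDemonic S1 S2) (IfDemonic S1' S2')"
| ifa: "remove_ext S1 S1' \<Longrightarrow> remove_ext S2 S2' \<Longrightarrow> remove_ext (IfAngelic S1 S2) (IfAngelic S1' S2')"

end

theory Submission
  imports Defs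
begin

(* Every vp transformer is monotone, and replacing an extensive statement by skip replaces its
   transformer by the identity, which lies below it. Monotonicity propagates this inequality
   through sequencing and both kinds of branching, so vp S' \<le> vp S, and any valid triple
   for the slice S' is then valid for S. *)

lemma vp_mono: "X \<le> Y \<Longrightarrow> vp S X \<le> vp S Y"
proof (induction S arbitrary: X Y)
  case (Assign x ps) then show ?case
    by (auto simp: le_fun_def split_def intro!: sum_list_mono mult_left_mono)
next
  case (Reward a) then show ?case by (auto simp: le_fun_def add_right_mono)
next
  case (Seq S1 S2) then show ?case by simp
next
  case (IfDemonic S1 S2) then show ?case unfolding le_fun_def vp.simps by (blast intro: min.mono)
next
  case (IfAngelic S1 S2) then show ?case unfolding le_fun_def vp.simps by (blast intro: max.mono)
next
  case (Assert Y) then show ?case by (auto simp: le_fun_def min.coboundedI1 min.coboundedI2)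
next
  case (Coassert Y) then show ?case by (auto simp: le_fun_def max.coboundedI1 max.coboundedI2)
next
  case (Assume Y) then show ?case by (auto simp: le_fun_def intro: order_trans)
next
  case (Coassume Y) then show ?case by (auto simp: le_fun_def intro: order_trans)
next
  case (Havoc x) then show ?case by (auto simp: le_fun_def intro!: INF_mono)
next
  case (Cohavoc x) then show ?case by (auto simp: le_fun_def intro!: SUP_mono)
next
  case Validate then show ?case by (auto simp: le_fun_def) (metis top.extremum_uniqueI)
next
  case Covalidate then show ?case by (auto simp: le_fun_def) (metis le_zero_eq)
next
  case Skip then show ?case by simp
qed

lemma remove_ext_vp_le: "remove_ext S S' \<Longrightarrow> vp S' Z \<le> vp S Z"
proof (induction arbitrary: Z rule: remove_ext.induct)
  case (keep S) then show ?case by simp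
next
  case (drop S) then show ?case by (simp add: extensive_def)
next
  case (seq S1 S1' S2 S2')
  have "vp S1' (vp S2' Z) \<le> vp S1 (vp S2' Z)" by (rule seq.IH(1))
  also have "\<dots> \<le> vp S1 (vp S2 Z)" by (rule vp_mono[OF seq.IH(2)])
  finally show ?case by simp
next
  case (ifd S1 S1' S2 S2') then show ?case unfolding le_fun_def vp.simps by (blast intro: min.mono)
next
  case (ifa S1 S1' S2 S2') then show ?case unfolding le_fun_def vp.simps by (blast intro: max.mono)
qed

lemma vw_slice_if_vp_le: "(\<And>Z. vp P Z \<le> vp S Z) \<Longrightarrow> vw_slice P S X Y"
  unfolding vw_slice_def valid_triple_def by (blast intro: order_trans)

theorem theorem3:
  fixes S S' :: "('v,'d) stmt"
  assumes "remove_ext S S'"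
  shows "(\<forall>X Y. vw_slice S' S X Y) \<and> (\<forall>Z. vp S' Z \<le> vp S Z)"
  using remove_ext_vp_le[OF assms] vw_slice_if_vp_le by blast

end
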